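(* Under the hypotheses of the following setting: $C_{ti},L^C_{ti},R^C_{ti},\eta_i>0$, $k^C_{1,i},k^C_{2,i},k^C_{3,i}\in\mathbb{R}$, $F_i^C$ as below, $P_i^C$ a real symmetric $3\times3$ matrix of the form $\begin{bmatrix}\eta_i&0&0\\0&p^C_{22,i}&p^C_{23,i}\\0&p^C_{23,i}&p^C_{33,i}\end{bmatrix}$ with $P_i^C>0$, and $Q_i^C=(F_i^C)^TP_i^C+P_i^CF_i^C$ satisfying $Q_i^C\le0$ and $Q_i^C\ne0$. Then for $w\in\mathbb{R}^3$ one has $w^TQ_i^Cw=0$ if and only if $w=(\alpha,0,\beta)^T$ for some $\alpha,\beta\in\mathbb{R}$.
   Context: $F_i^C=\begin{bmatrix}0&\frac{1}{C_{ti}}&0\\ \frac{k^C_{1,i}-1}{L^C_{ti}}&\frac{k^C_{2,i}-R^C_{ti}}{L^C_{ti}}&\frac{k^C_{3,i}}{L^C_{ti}}\\ 0&-1&0\end{bmatrix}$. Inequalities between symmetric matrices are in the semidefinite (Loewner) sense. *)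

theory Defs
  imports "HOL-Analysis.Analysis"
begin

definition pos_def_mat :: "real^'n^'n \<Rightarrow> bool" where
  "pos_def_mat A \<longleftrightarrow> transpose A = A \<and> (\<forall>x. x \<noteq> 0 \<longrightarrow> x \<bullet> (A *v x) > 0)"

definition neg_semidef_mat :: "real^'n^'n \<Rightarrow> bool" where
  "neg_semidef_mat A \<longleftrightarrow> transpose A = A \<and> (\<forall>x. x \<bullet> (A *v x) \<le> 0)"

definition F_C :: "real \<Rightarrow> real \<Rightarrow> real \<Rightarrow> real \<Rightarrow> real \<Rightarrow> real \<Rightarrow> real^3^3" where
  "F_C C L R k1 k2 k3 =
     vector [vector [0, 1 / C, 0],
             vector [(k1 - 1) / L, (k2 - R) / L, k3 / L],
             vector [0, -1, 0]]"

definition P_C :: "real \<Rightarrow> real \<Rightarrow> real \<Rightarrow> real \<Rightarrow> real^3^3" where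
  "P_C \<eta> p22 p23 p33 =
     vector [vector [\<eta>, 0, 0],
             vector [0, p22, p23],
             vector [0, p23, p33]]"

end

theory Submission
  imports Defs
begin

text \<open>Since the (1,1) entry of \<open>Q\<close> vanishes, negative semidefiniteness kills the first row
  and column of \<open>Q\<close>. The vanishing (1,2) entry \<open>\<eta>/C + p22 (k1 - 1)/L\<close> forces \<open>k1 \<noteq> 1\<close>,
  so the vanishing (1,3) entry \<open>p23 (k1 - 1)/L\<close> forces \<open>p23 = 0\<close>. Then the (3,3) entry
  \<open>2 p23 k3/L\<close> vanishes as well, which kills the third row and column. Hence \<open>Q\<close> has a
  single nonzero entry at (2,2), and \<open>w\<^sup>T Q w\<close> is a nonzero multiple of \<open>w\<^sub>2\<^sup>2\<close>.\<close>

lemma affine_le_0_imp_slope_0: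
  fixes a b :: real
  assumes "\<And>x. a * x + b \<le> 0"
  shows "a = 0"
proof (rule ccontr)
  assume "a \<noteq> 0"
  have "a * ((1 - b) / a) + b \<le> 0" by (rule assms)
  with \<open>a \<noteq> 0\<close> show False by simp
qed

lemma neg_semidef_mat_sym:
  fixes Q :: "real^'n^'n"
  assumes "neg_semidef_mat Q"
  shows "Q $ j $ i = Q $ i $ j"
  using assms unfolding neg_semidef_mat_def by (metis transpose_def vec_lambda_beta)

lemma neg_semidef_mat_zero_diag_imp_zero_row:
  fixes Q :: "real^'n^'n"
  assumes "neg_semidef_mat Q" and "Q $ i $ i = 0"
  shows "Q $ i $ j = 0"
proof (cases "j = i")
  case False
  have sym: "Q $ j $ i = Q $ i $ j" using assms(1) by (rule neg_semidef_mat_sym)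
  have "(2 * Q $ i $ j) * t + Q $ j $ j \<le> 0" for t
  proof -
    have "(t *\<^sub>R axis i 1 + axis j 1) \<bullet> (Q *v (t *\<^sub>R axis i 1 + axis j 1)) \<le> 0"
      using assms(1) unfolding neg_semidef_mat_def by blast
    then show ?thesis
      using assms(2) sym
      by (simp add: matrix_vector_right_distrib matrix_vector_mult_scaleR inner_add_left
          inner_add_right inner_axis inner_axis' matrix_vector_mult_basis column_def algebra_simps)
  qed
  then have "2 * Q $ i $ j = 0" by (rule affine_le_0_imp_slope_0)
  then show ?thesis by simp
qed (use assms in simp)

lemma quadratic_form_single_entry:
  fixes Q :: "real^'n^'n"
  assumes "\<And>i j. (i, j) \<noteq> (k, k) \<Longrightarrow> Q $ i $ j = 0"
  shows "w \<bullet> (Q *v w) = Q $ k $ k * (w $ k)\<^sup>2"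
proof -
  have "(Q *v w) $ i = axis k (Q $ k $ k * w $ k) $ i" for i
  proof -
    have "(\<Sum>j\<in>UNIV. Q $ i $ j * w $ j)
        = (\<Sum>j\<in>UNIV. if j = k \<and> i = k then Q $ k $ k * w $ k else 0)"
      by (rule sum.cong) (use assms in auto)
    then show ?thesis by (simp add: matrix_vector_mult_def axis_def)
  qed
  then have "Q *v w = axis k (Q $ k $ k * w $ k)" by (simp add: vec_eq_iff)
  then show ?thesis by (simp add: inner_axis power2_eq_square)
qed

lemma vector_3_middle_0_iff:
  fixes w :: "real^3"
  shows "(\<exists>\<alpha> \<beta>. w = vector [\<alpha>, 0, \<beta>]) \<longleftrightarrow> w $ 2 = 0"
proof
  assume "w $ 2 = 0"
  then have "w = vector [w $ 1, 0, w $ 3]" by (simp add: vec_eq_iff forall_3 vector_3)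
  then show "\<exists>\<alpha> \<beta>. w = vector [\<alpha>, 0, \<beta>]" by blast
qed (auto simp: vector_3)

definition Q_C :: "real \<Rightarrow> real \<Rightarrow> real \<Rightarrow> real \<Rightarrow> real \<Rightarrow> real \<Rightarrow> real \<Rightarrow> real \<Rightarrow> real \<Rightarrow> real
    \<Rightarrow> real^3^3" where
  "Q_C C L R k1 k2 k3 \<eta> p22 p23 p33 =
     transpose (F_C C L R k1 k2 k3) ** P_C \<eta> p22 p23 p33 + P_C \<eta> p22 p23 p33 ** F_C C L R k1 k2 k3"

lemma Q_C_eq:
  "Q_C C L R k1 k2 k3 \<eta> p22 p23 p33 =
   vector [vector [0, \<eta>/C + p22 * ((k1 - 1)/L), p23 * ((k1 - 1)/L)],
           vector [\<eta>/C + p22 * ((k1 - 1)/L), 2 * (p22 * ((k2 - R)/L) - p23),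
                   p22 * (k3/L) + p23 * ((k2 - R)/L) - p33],
           vector [p23 * ((k1 - 1)/L), p22 * (k3/L) + p23 * ((k2 - R)/L) - p33,
                   2 * (p23 * (k3/L))]]"
  by (simp add: Q_C_def vec_eq_iff forall_3 F_C_def P_C_def matrix_matrix_mult_def
      transpose_def sum_3 vector_3 algebra_simps)

theorem lemma1:
  fixes C L R \<eta> k1 k2 k3 p22 p23 p33 :: real
    and w :: "real^3"
  assumes "C > 0" and "L > 0" and "R > 0" and "\<eta> > 0"
    and "pos_def_mat (P_C \<eta> p22 p23 p33)"
    and "neg_semidef_mat (transpose (F_C C L R k1 k2 k3) ** P_C \<eta> p22 p23 p33
                          + P_C \<eta> p22 p23 p33 ** F_C C L R k1 k2 k3)"
    and "transpose (F_C C L R k1 k2 k3) ** P_C \<eta> p22 p23 p33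
           + P_C \<eta> p22 p23 p33 ** F_C C L R k1 k2 k3 \<noteq> 0"
  shows "w \<bullet> ((transpose (F_C C L R k1 k2 k3) ** P_C \<eta> p22 p23 p33
                 + P_C \<eta> p22 p23 p33 ** F_C C L R k1 k2 k3) *v w) = 0
         \<longleftrightarrow> (\<exists>\<alpha> \<beta>. w = vector [\<alpha>, 0, \<beta>])"
proof -
  define Q where "Q = Q_C C L R k1 k2 k3 \<eta> p22 p23 p33"
  have nsd: "neg_semidef_mat Q" and "Q \<noteq> 0"
    using assms(6,7) by (simp_all add: Q_def Q_C_def)
  note entries = Q_C_eq[of C L R k1 k2 k3 \<eta> p22 p23 p33, folded Q_def]
  have "Q $ 1 $ 1 = 0" using entries by (simp add: vector_3)
  then have row1: "Q $ 1 $ j = 0" for j by (rule neg_semidef_mat_zero_diag_imp_zero_row[OF nsd])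
  have "\<eta>/C + p22 * ((k1 - 1)/L) = 0"
    using row1[of 2] entries by (simp add: vector_3)
  with assms(1,4) have "(k1 - 1)/L \<noteq> 0" by (auto simp: add_eq_0_iff)
  with row1[of 3] entries have "p23 = 0" by (simp add: vector_3)
  then have "Q $ 3 $ 3 = 0" using entries by (simp add: vector_3)
  then have row3: "Q $ 3 $ j = 0" for j by (rule neg_semidef_mat_zero_diag_imp_zero_row[OF nsd])
  have single: "Q $ i $ j = 0" if "(i, j) \<noteq> (2, 2)" for i j
  proof -
    have "Q $ i $ j = 0 \<or> Q $ j $ i = 0"
      using that row1 row3 exhaust_3[of i] exhaust_3[of j] by auto
    then show ?thesis using neg_semidef_mat_sym[OF nsd] by metis
  qed
  have "Q $ 2 $ 2 \<noteq> 0"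
  proof
    assume "Q $ 2 $ 2 = 0"
    then have "Q $ i $ j = 0" for i j using single[of i j] by (cases "(i, j) = (2, 2)") auto
    with \<open>Q \<noteq> 0\<close> show False by (simp add: vec_eq_iff)
  qed
  then show ?thesis
    using quadratic_form_single_entry[of 2 Q w, OF single] vector_3_middle_0_iff[of w]
    by (simp add: Q_def Q_C_def)
qed

end
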